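(* Let $m\ge2$ and let $\mathbb N$ be the directed cycle $1\to2\to\cdots\to m\to1$, where agent $i$ receives $C_ix_{i-1}$ from agent $i-1$ (vertex $0$ being vertex $m$, $x_0:=x_m$), each $C_i$ a real full-row-rank matrix with $n$ columns, and $P_i=C_i'(C_iC_i')^{-1}C_i$. Assume $\bar{\mathbb N}$ is well-configured, i.e. for all $x_1,\dots,x_m\in\mathbb R^n$, $C_ix_i=C_ix_{i-1}$ for all $i$ implies $x_1=\cdots=x_m$. Then for arbitrary initial states $x_i(0)\in\mathbb R^n$, the iteration $$x_i(t+1)=x_i(t)-\tfrac12P_i\big(x_i(t)-x_{i-1}(t)\big),\qquad i=1,\dots,m,$$ makes all $x_i(t)$ converge to a common vector $x^*\in\mathbb R^n$ exponentially fast.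
   Context: $'$ denotes transpose; $P_i$ is the orthogonal projection onto $(\ker C_i)^\perp$. Exponentially fast: there exist $c>0$, $\rho\in[0,1)$ with $\|x_i(t)-x^*\|\le c\rho^t$ for all $i,t$. *)

theory Defs
  imports "Jordan_Normal_Form.DL_Rank" "Jordan_Normal_Form.Gauss_Jordan_Elimination"
begin

definition cyc_prev :: "nat \<Rightarrow> nat \<Rightarrow> nat" where
  "cyc_prev m i = (if i = 1 then m else i - 1)"

definition proj_mat :: "real mat \<Rightarrow> real mat" where
  "proj_mat C = transpose_mat C * the (mat_inverse (C * transpose_mat C)) * C"

definition vnorm :: "real vec \<Rightarrow> real" where
  "vnorm v = sqrt (v \<bullet> v)"

definition full_row_rank :: "real mat \<Rightarrow> bool" where
  "full_row_rank C = (vec_space.rank (dim_row C) C = dim_row C)"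

definition well_configured :: "nat \<Rightarrow> nat \<Rightarrow> (nat \<Rightarrow> real mat) \<Rightarrow> bool" where
  "well_configured n m C = (\<forall>xs :: nat \<Rightarrow> real vec.
      (\<forall>i\<in>{1..m}. xs i \<in> carrier_vec n) \<longrightarrow>
      (\<forall>i\<in>{1..m}. C i *\<^sub>v xs i = C i *\<^sub>v xs (cyc_prev m i)) \<longrightarrow>
      (\<forall>i\<in>{1..m}. \<forall>j\<in>{1..m}. xs i = xs j))"

end

theory Submission
  imports Defs "HOL-Analysis.Elementary_Metric_Spaces"
begin

(* The increments D_i(t) = x_i(t) - x_i(t+1) = 1/2 P_i (x_i(t) - x_{i-1}(t)) obey
   D_i(t+1) = 1/2 (D_i(t) + P_i D_{i-1}(t)). Since P_i is an orthogonal projection fixing D_i(t),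
   the energy E = sum_i |D_i|^2 satisfies E(t+1) + 1/4 sum_i |D_i(t) - D_{i-1}(t)|^2 <= E(t).
   The increments stay in a subspace (D_i in the range of P_i, sum_i D_i orthogonal to every common
   fixed point of the P_i) on which this disagreement vanishes only at 0; by compactness it dominates
   a multiple of E, so E decays geometrically. Hence every x_i(t) converges exponentially to some y_i
   with P_i (y_i - y_{i-1}) = 0, i.e. C_i y_i = C_i y_{i-1}, and well-configuredness makes all the
   y_i equal. *)

section \<open>Euclidean geometry of real vectors\<close>

lemma scalar_prod_self_nonneg: "0 \<le> (v :: real vec) \<bullet> v"
  using conjugate_square_ge_0_vec[of v] by simp

lemma scalar_prod_self_eq_0_iff:
  "v \<in> carrier_vec n \<Longrightarrow> v \<bullet> (v :: real vec) = 0 \<longleftrightarrow> v = 0\<^sub>v n"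
  using conjugate_square_eq_0_vec[of v n] by simp

lemma vec_diff_eq_0_iff:
  fixes u v :: "'a :: ab_group_add vec"
  assumes "u \<in> carrier_vec n" "v \<in> carrier_vec n"
  shows "u - v = 0\<^sub>v n \<longleftrightarrow> u = v"
proof
  assume diff: "u - v = 0\<^sub>v n"
  show "u = v"
  proof (rule eq_vecI)
    fix j assume "j < dim_vec v"
    then show "u $ j = v $ j" using arg_cong[OF diff, of "\<lambda>w. w $ j"] assms by simp
  qed (use assms in simp)
qed (use assms in simp)

lemma scalar_prod_diff_self_eq_0_iff:
  assumes "u \<in> carrier_vec n" "v \<in> carrier_vec n"
  shows "(u - v) \<bullet> (u - v) = 0 \<longleftrightarrow> u = (v :: real vec)"
  using scalar_prod_self_eq_0_iff[of "u - v" n] vec_diff_eq_0_iff[OF assms] assms by simp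

lemma scalar_prod_add_self:
  assumes "u \<in> carrier_vec n" "v \<in> carrier_vec n"
  shows "(u + v) \<bullet> (u + v) = u \<bullet> u + 2 * (u \<bullet> v) + v \<bullet> (v :: real vec)"
  using assms unfolding scalar_prod_def
  by (simp add: sum.distrib sum_distrib_left algebra_simps)

lemma scalar_prod_diff_self:
  assumes "u \<in> carrier_vec n" "v \<in> carrier_vec n"
  shows "(u - v) \<bullet> (u - v) = u \<bullet> u - 2 * (u \<bullet> v) + v \<bullet> (v :: real vec)"
  using assms unfolding scalar_prod_def
  by (simp add: sum.distrib sum_distrib_left sum_subtractf algebra_simps)

lemma scalar_prod_smult_self: "(c \<cdot>\<^sub>v u) \<bullet> (c \<cdot>\<^sub>v u) = c\<^sup>2 * (u \<bullet> (u :: real vec))"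
  unfolding scalar_prod_def by (simp add: sum_distrib_left algebra_simps power2_eq_square)

lemma index_sq_le_scalar_prod_self:
  assumes "v \<in> carrier_vec n" "j < n"
  shows "(v $ j)\<^sup>2 \<le> v \<bullet> (v :: real vec)"
proof -
  have "v $ j * v $ j \<le> (\<Sum>l\<in>{0..<n}. v $ l * v $ l)"
    using assms by (intro member_le_sum) auto
  then show ?thesis using assms by (simp add: scalar_prod_def power2_eq_square)
qed

lemma vnorm_le_sqrt_dim:
  assumes v: "v \<in> carrier_vec n" and bound: "\<And>j. j < n \<Longrightarrow> \<bar>v $ j\<bar> \<le> b"
  shows "vnorm v \<le> sqrt (real n) * b"
proof -
  have "n > 0 \<Longrightarrow> b \<ge> 0" using bound[of 0] by linarith
  then have b: "0 \<le> sqrt (real n) * b" by (cases "n = 0") auto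
  have "v \<bullet> v = (\<Sum>j<n. \<bar>v $ j\<bar>\<^sup>2)"
    using v by (simp add: scalar_prod_def atLeast0LessThan power2_eq_square)
  also have "\<dots> \<le> (\<Sum>j<n. b\<^sup>2)"
    using bound by (intro sum_mono power_mono) auto
  also have "\<dots> = (sqrt (real n) * b)\<^sup>2" by (simp add: power_mult_distrib)
  finally show ?thesis
    unfolding vnorm_def using b by (metis real_sqrt_le_mono real_sqrt_abs abs_of_nonneg)
qed

section \<open>Orthogonal projections\<close>

definition orthogonal_projection :: "nat \<Rightarrow> real mat \<Rightarrow> bool" where
  "orthogonal_projection n P \<longleftrightarrow> P \<in> carrier_mat n n \<and> P * P = P \<and> P\<^sup>T = P"

lemma scalar_prod_symmetric_mult_mat_vec:
  assumes P: "P \<in> carrier_mat n n" "P\<^sup>T = P" and a: "a \<in> carrier_vec n" and b: "b \<in> carrier_vec n"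
  shows "(P *\<^sub>v a) \<bullet> b = a \<bullet> (P *\<^sub>v (b :: real vec))"
proof -
  have "(P *\<^sub>v a) \<bullet> b = b \<bullet> (P *\<^sub>v a)" using P a b by (intro comm_scalar_prod) auto
  also have "\<dots> = (P\<^sup>T *\<^sub>v b) \<bullet> a" using transpose_vec_mult_scalar[OF P(1) a b] by simp
  also have "\<dots> = a \<bullet> (P *\<^sub>v b)" using P a b comm_scalar_prod[of "P *\<^sub>v b" n a] by simp
  finally show ?thesis .
qed

lemma orthogonal_projection_idem_vec:
  assumes "orthogonal_projection n P" "v \<in> carrier_vec n"
  shows "P *\<^sub>v (P *\<^sub>v v) = P *\<^sub>v v"
  using assms unfolding orthogonal_projection_def by (metis assoc_mult_mat_vec)

lemma orthogonal_projection_scalar_prod_le: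
  assumes P: "orthogonal_projection n P" and b: "b \<in> carrier_vec n"
  shows "(P *\<^sub>v b) \<bullet> (P *\<^sub>v b) \<le> b \<bullet> b"
proof -
  have Pc: "P \<in> carrier_mat n n" "P\<^sup>T = P" using P by (auto simp: orthogonal_projection_def)
  have Pb: "P *\<^sub>v b \<in> carrier_vec n" using Pc b by simp
  have "(P *\<^sub>v b) \<bullet> (P *\<^sub>v b) = b \<bullet> (P *\<^sub>v b)"
    using scalar_prod_symmetric_mult_mat_vec[OF Pc b Pb] orthogonal_projection_idem_vec[OF P b]
    by simp
  moreover have "0 \<le> (b - P *\<^sub>v b) \<bullet> (b - P *\<^sub>v b)" by (rule scalar_prod_self_nonneg)
  ultimately show ?thesis using scalar_prod_diff_self[OF b Pb] by simp
qed

lemma orthogonal_projection_average_le: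
  assumes P: "orthogonal_projection n P"
    and a: "a \<in> carrier_vec n" and b: "b \<in> carrier_vec n" and Pa: "P *\<^sub>v a = a"
  shows "((1/2) \<cdot>\<^sub>v (a + P *\<^sub>v b)) \<bullet> ((1/2) \<cdot>\<^sub>v (a + P *\<^sub>v b)) + (1/4) * ((a - b) \<bullet> (a - b))
    \<le> (1/2) * (a \<bullet> a) + (1/2) * (b \<bullet> b)"
proof -
  have Pc: "P \<in> carrier_mat n n" "P\<^sup>T = P" using P by (auto simp: orthogonal_projection_def)
  have Pb: "P *\<^sub>v b \<in> carrier_vec n" using Pc b by simp
  have "a \<bullet> (P *\<^sub>v b) = a \<bullet> b"
    using scalar_prod_symmetric_mult_mat_vec[OF Pc a b] Pa by simp
  then show ?thesis
    using scalar_prod_smult_self[of "1/2" "a + P *\<^sub>v b"] scalar_prod_add_self[OF a Pb]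
      scalar_prod_diff_self[OF a b] orthogonal_projection_scalar_prod_le[OF P b]
    by (simp add: power2_eq_square field_simps)
qed

lemma (in vec_space) full_rank_transpose_mult_vec_eq_0:
  assumes C: "C \<in> carrier_mat n nc" and rank: "rank C = n"
    and v: "v \<in> carrier_vec n" and Cv: "C\<^sup>T *\<^sub>v v = 0\<^sub>v nc"
  shows "v = 0\<^sub>v n"
proof -
  \<comment> \<open>a maximal independent set of columns of C forms an invertible matrix A, and v is
    orthogonal to each of its columns\<close>
  obtain S where S: "maximal S (\<lambda>T. T \<subseteq> set (cols C) \<and> lin_indpt T)"
    using maximal_exists[of "\<lambda>T. T \<subseteq> set (cols C) \<and> lin_indpt T" "card (set (cols C))" "{}"]
    by (meson List.finite_set card_mono empty_iff empty_subsetI finite_lin_indpt2 rev_finite_subset)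
  then have S_cols: "S \<subseteq> set (cols C)" and S_indpt: "lin_indpt S" unfolding maximal_def by auto
  obtain xs where xs: "set xs = S" "distinct xs"
    using finite_distinct_list[OF finite_subset[OF S_cols]] by blast
  have len: "length xs = n" using xs rank_card_indpt[OF C S] rank distinct_card by fastforce
  define A where "A = mat_of_cols n xs"
  have A: "A \<in> carrier_mat n n" unfolding A_def using len by auto
  have "set xs \<subseteq> carrier_vec n" using xs S_cols cols_dim C by blast
  then have cols_A: "cols A = xs" unfolding A_def by simp
  have "det A \<noteq> 0"
    using lin_indpt_full_rank[OF A] cols_A xs S_indpt det_rank_iff[OF A] by simp
  then have det_AT: "det A\<^sup>T \<noteq> 0" using det_transpose[OF A] by simp
  have "A\<^sup>T *\<^sub>v v = 0\<^sub>v n"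
  proof (rule eq_vecI)
    fix j assume "j < dim_vec (0\<^sub>v n)"
    then have j: "j < n" by simp
    then obtain l where l: "l < nc" "xs ! j = col C l"
      using len xs S_cols C by (metis carrier_matD(2) cols_length cols_nth in_set_conv_nth nth_mem subsetD)
    have "(A\<^sup>T *\<^sub>v v) $ j = col A j \<bullet> v" using j A by simp
    also have "col A j = col C l" using cols_A j len A l by (metis cols_nth carrier_matD(2))
    also have "col C l \<bullet> v = (C\<^sup>T *\<^sub>v v) $ l" using l C by simp
    finally show "(A\<^sup>T *\<^sub>v v) $ j = 0\<^sub>v n $ j" using Cv j l by simp
  qed (use A in simp)
  then show ?thesis
    using det_0_iff_vec_prod_zero_field[of "A\<^sup>T" n] A det_AT v by auto
qed

lemma det_mult_transpose_nonzero:
  assumes C: "C \<in> carrier_mat k n" and rank: "full_row_rank C"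
  shows "det (C * C\<^sup>T) \<noteq> 0"
proof -
  have "v = 0\<^sub>v k" if v: "v \<in> carrier_vec k" and Gv: "(C * C\<^sup>T) *\<^sub>v v = 0\<^sub>v k" for v
  proof -
    have CTv: "C\<^sup>T *\<^sub>v v \<in> carrier_vec n" using C v by simp
    have "(C\<^sup>T *\<^sub>v v) \<bullet> (C\<^sup>T *\<^sub>v v) = v \<bullet> ((C * C\<^sup>T) *\<^sub>v v)"
      using transpose_vec_mult_scalar[OF C CTv v] C v by (simp add: assoc_mult_mat_vec)
    then have "C\<^sup>T *\<^sub>v v = 0\<^sub>v n" using Gv v CTv scalar_prod_self_eq_0_iff by simp
    then show ?thesis
      using vec_space.full_rank_transpose_mult_vec_eq_0[OF C _ v] rank C
      unfolding full_row_rank_def by simp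
  qed
  then show ?thesis using det_0_iff_vec_prod_zero_field[of "C * C\<^sup>T" k] C by auto
qed

lemma proj_mat_factorization:
  assumes C: "C \<in> carrier_mat k n" and rank: "full_row_rank C"
  obtains B where "B \<in> carrier_mat k k" "C * C\<^sup>T * B = 1\<^sub>m k" "B\<^sup>T = B"
    "proj_mat C = C\<^sup>T * B * C"
proof -
  define G where "G = C * C\<^sup>T"
  have G: "G \<in> carrier_mat k k" unfolding G_def using C by simp
  have "mat_inverse G \<noteq> None"
    using det_mult_transpose_nonzero[OF C rank] mat_inverse(1)[OF G, where b="()"]
      det_non_zero_imp_unit[OF G, where b="()"] unfolding G_def by blast
  then obtain B where B_inv: "mat_inverse G = Some B" by blast
  then have GB: "G * B = 1\<^sub>m k" and B: "B \<in> carrier_mat k k"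
    using mat_inverse(2)[OF G] by auto
  have GT: "G\<^sup>T = G" unfolding G_def using C by (simp add: transpose_mult)
  have "B\<^sup>T * G = 1\<^sub>m k"
    using arg_cong[OF GB, of transpose_mat] G B GT by (simp add: transpose_mult)
  then have "B\<^sup>T = B"
    using B G GB by (metis assoc_mult_mat left_mult_one_mat right_mult_one_mat transpose_carrier_mat)
  moreover have "proj_mat C = C\<^sup>T * B * C" unfolding proj_mat_def G_def[symmetric] B_inv by simp
  ultimately show ?thesis using that B GB unfolding G_def by blast
qed

lemma mult_proj_mat:
  assumes C: "C \<in> carrier_mat k n" and "full_row_rank C"
  shows "C * proj_mat C = C"
proof -
  obtain B where B: "B \<in> carrier_mat k k" "C * C\<^sup>T * B = 1\<^sub>m k" "proj_mat C = C\<^sup>T * B * C"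
    using proj_mat_factorization[OF assms] by metis
  have CT: "C\<^sup>T \<in> carrier_mat n k" using C by simp
  have "C * (C\<^sup>T * B * C) = (C * (C\<^sup>T * B)) * C"
    using assoc_mult_mat[of C k n "C\<^sup>T * B" k C n] C CT B by simp
  also have "C * (C\<^sup>T * B) = 1\<^sub>m k" using B assoc_mult_mat[OF C CT B(1)] by simp
  finally show ?thesis using B C by simp
qed

lemma proj_mat_orthogonal_projection:
  assumes C: "C \<in> carrier_mat k n" and rank: "full_row_rank C"
  shows "orthogonal_projection n (proj_mat C)"
proof -
  obtain B where B: "B \<in> carrier_mat k k" "B\<^sup>T = B" and P: "proj_mat C = C\<^sup>T * (B * C)"
    using proj_mat_factorization[OF assms] C by (metis assoc_mult_mat transpose_carrier_mat)
  have CT: "C\<^sup>T \<in> carrier_mat n k" and BC: "B * C \<in> carrier_mat k n" using B C by auto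
  have Pc: "proj_mat C \<in> carrier_mat n n" unfolding P using CT BC by simp
  have "proj_mat C * proj_mat C = C\<^sup>T * ((B * C) * proj_mat C)"
    using assoc_mult_mat[OF CT BC Pc] unfolding P by simp
  also have "(B * C) * proj_mat C = B * C"
    using assoc_mult_mat[OF B(1) C Pc] mult_proj_mat[OF assms] by simp
  finally have "proj_mat C * proj_mat C = proj_mat C" unfolding P .
  moreover have "(C\<^sup>T * (B * C))\<^sup>T = C\<^sup>T * (B * C)"
    using transpose_mult[OF CT BC] transpose_mult[OF B(1) C] B(2) assoc_mult_mat[OF CT B(1) C]
    by simp
  ultimately show ?thesis using Pc unfolding orthogonal_projection_def P by simp
qed

lemma proj_mat_mult_vec_diff_eq_0:
  assumes C: "C \<in> carrier_mat k n" "full_row_rank C"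
    and u: "u \<in> carrier_vec n" and v: "v \<in> carrier_vec n"
    and diff: "proj_mat C *\<^sub>v (u - v) = 0\<^sub>v n"
  shows "C *\<^sub>v u = C *\<^sub>v v"
proof -
  have P: "proj_mat C \<in> carrier_mat n n"
    using proj_mat_orthogonal_projection[OF C] unfolding orthogonal_projection_def by blast
  have "C *\<^sub>v (u - v) = (C * proj_mat C) *\<^sub>v (u - v)" using mult_proj_mat[OF C] by simp
  also have "\<dots> = C *\<^sub>v 0\<^sub>v n" using assoc_mult_mat_vec[OF C(1) P, of "u - v"] diff u v by simp
  also have "\<dots> = 0\<^sub>v k" using C(1) by (intro eq_vecI) auto
  finally have "C *\<^sub>v u - C *\<^sub>v v = 0\<^sub>v k"
    using mult_minus_distrib_mat_vec[OF C(1) u v] by simp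
  then show ?thesis
    using vec_diff_eq_0_iff[of "C *\<^sub>v u" k "C *\<^sub>v v"] C(1) u v by simp
qed

section \<open>Coordinatewise convergence\<close>

definition vec_tendsto :: "nat \<Rightarrow> (nat \<Rightarrow> real vec) \<Rightarrow> real vec \<Rightarrow> bool" where
  "vec_tendsto n X y \<longleftrightarrow> (\<forall>j<n. (\<lambda>k. X k $ j) \<longlonglongrightarrow> y $ j)"

lemma vec_tendsto_const: "vec_tendsto n (\<lambda>k. c) c"
  unfolding vec_tendsto_def by simp

lemma vec_tendsto_unique:
  assumes "vec_tendsto n X y" "vec_tendsto n X z" "y \<in> carrier_vec n" "z \<in> carrier_vec n"
  shows "y = z"
  using assms unfolding vec_tendsto_def by (intro eq_vecI) (auto intro: LIMSEQ_unique)

lemma vec_tendsto_minus: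
  assumes "vec_tendsto n X x" "vec_tendsto n Y y"
    and "\<And>k. Y k \<in> carrier_vec n" "y \<in> carrier_vec n"
  shows "vec_tendsto n (\<lambda>k. X k - Y k) (x - y)"
proof -
  have "dim_vec (Y k) = n" "dim_vec y = n" for k using assms(3,4) by auto
  then show ?thesis using assms(1,2) unfolding vec_tendsto_def by (auto intro: tendsto_diff)
qed

lemma vec_tendsto_mult_mat_vec:
  assumes "vec_tendsto n X x" "A \<in> carrier_mat n' n"
    and "\<And>k. X k \<in> carrier_vec n" "x \<in> carrier_vec n"
  shows "vec_tendsto n' (\<lambda>k. A *\<^sub>v X k) (A *\<^sub>v x)"
proof -
  have "dim_vec (X k) = n" "dim_vec x = n" for k using assms(3,4) by auto
  then show ?thesis using assms(1,2) unfolding vec_tendsto_def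
    by (auto simp: scalar_prod_def intro!: tendsto_sum tendsto_mult)
qed

lemma tendsto_scalar_prod:
  assumes "vec_tendsto n X x" "vec_tendsto n Y y"
    and "\<And>k. Y k \<in> carrier_vec n" "y \<in> carrier_vec n"
  shows "(\<lambda>k. X k \<bullet> Y k) \<longlonglongrightarrow> x \<bullet> y"
proof -
  have "dim_vec (Y k) = n" "dim_vec y = n" for k using assms(3,4) by auto
  then show ?thesis using assms(1,2) unfolding vec_tendsto_def scalar_prod_def
    by (auto intro!: tendsto_sum tendsto_mult)
qed

lemma vec_tendsto_geometricI:
  assumes bound: "\<And>t j. j < n \<Longrightarrow> \<bar>X t $ j - y $ j\<bar> \<le> B * \<sigma> ^ t"
    and \<sigma>: "0 \<le> \<sigma>" "\<sigma> < 1"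
  shows "vec_tendsto n X y"
  unfolding vec_tendsto_def
proof (intro allI impI)
  fix j assume "j < n"
  have geometric: "(\<lambda>t. B * \<sigma> ^ t) \<longlonglongrightarrow> 0"
    using \<sigma> by (intro tendsto_mult_right_zero LIMSEQ_power_zero) simp
  have "(\<lambda>t. \<bar>X t $ j - y $ j\<bar>) \<longlonglongrightarrow> 0"
  proof (rule real_tendsto_sandwich[OF _ _ tendsto_const geometric])
    show "\<forall>\<^sub>F t in sequentially. 0 \<le> \<bar>X t $ j - y $ j\<bar>"
      by (intro always_eventually allI abs_ge_zero)
    show "\<forall>\<^sub>F t in sequentially. \<bar>X t $ j - y $ j\<bar> \<le> B * \<sigma> ^ t"
      by (intro always_eventually allI bound \<open>j < n\<close>)
  qed
  then have "(\<lambda>t. X t $ j - y $ j) \<longlonglongrightarrow> 0"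
    by (simp add: tendsto_rabs_zero_iff)
  then show "(\<lambda>t. X t $ j) \<longlonglongrightarrow> y $ j"
    by (simp add: LIM_zero_iff)
qed

lemma bounded_vec_families_convergent_subseq:
  fixes X :: "nat \<Rightarrow> nat \<Rightarrow> real vec"
  assumes I: "finite I" and bound: "\<And>k i j. i \<in> I \<Longrightarrow> j < n \<Longrightarrow> \<bar>X k i $ j\<bar> \<le> B"
  obtains r Y where "strict_mono r" "\<And>i. Y i \<in> carrier_vec n"
    "\<And>i. i \<in> I \<Longrightarrow> vec_tendsto n (\<lambda>k. X (r k) i) (Y i)"
proof -
  define f where "f k ij = X k (fst ij) $ snd ij" for k and ij :: "nat \<times> nat"
  have "\<forall>\<delta>\<subseteq>I \<times> {..<n}. \<exists>l r. strict_mono r \<and>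
      (\<forall>\<epsilon>>0. \<forall>\<^sub>F k in sequentially. \<forall>ij\<in>\<delta>. dist (f (r k) ij) (l ij) < \<epsilon>)"
  proof (rule compact_lemma_general[where proj = "\<lambda>x ij. x ij" and unproj = "\<lambda>x. x"])
    show "bounded ((\<lambda>x. x ij) ` range f)" if "ij \<in> I \<times> {..<n}" for ij
      unfolding bounded_iff f_def using bound that by (intro exI[of _ B]) auto
  qed (use I in auto)
  then obtain l r where r: "strict_mono r"
    and l: "\<And>\<epsilon>. \<epsilon> > 0 \<Longrightarrow> \<forall>\<^sub>F k in sequentially. \<forall>ij\<in>I \<times> {..<n}. dist (f (r k) ij) (l ij) < \<epsilon>"
    by blast
  have "vec_tendsto n (\<lambda>k. X (r k) i) (vec n (\<lambda>j. l (i, j)))" if "i \<in> I" for i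
    unfolding vec_tendsto_def
  proof (intro allI impI tendstoI)
    fix j \<epsilon> assume "j < n" "(\<epsilon>::real) > 0"
    then show "\<forall>\<^sub>F k in sequentially. dist (X (r k) i $ j) (vec n (\<lambda>j. l (i, j)) $ j) < \<epsilon>"
      using l[of \<epsilon>] that by (auto elim!: eventually_mono simp: f_def)
  qed
  then show ?thesis using that[OF r, of "\<lambda>i. vec n (\<lambda>j. l (i, j))"] by simp
qed

lemma geometric_increments_lim_bound:
  fixes f :: "nat \<Rightarrow> real"
  assumes step: "\<And>t. \<bar>f (Suc t) - f t\<bar> \<le> K * \<sigma> ^ t" and \<sigma>: "0 \<le> \<sigma>" "\<sigma> < 1"
  shows "\<bar>f t - lim f\<bar> \<le> K / (1 - \<sigma>) * \<sigma> ^ t"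
proof -
  define g where "g s = f (Suc s) - f s" for s
  have geometric: "summable (\<lambda>s. K * \<sigma> ^ s)" using \<sigma> by (intro summable_mult summable_geometric) simp
  have g: "summable (\<lambda>s. norm (g s))"
    by (rule summable_comparison_test'[OF geometric]) (use step in \<open>simp add: g_def\<close>)
  define F where "F t = f 0 + (\<Sum>s<t. g s)" for t
  have f_eq: "f = F"
    unfolding F_def g_def by (rule ext) (simp add: sum_lessThan_telescope)
  have "F \<longlonglongrightarrow> f 0 + (\<Sum>s. g s)"
    unfolding F_def by (intro tendsto_add tendsto_const summable_LIMSEQ summable_norm_cancel[OF g])
  then have "f t - lim f = F t - (f 0 + (\<Sum>s. g s))"
    unfolding f_eq by (simp add: limI)
  also have "\<dots> = - (\<Sum>s. g (s + t))"
    using suminf_split_initial_segment[OF summable_norm_cancel[OF g], of t] unfolding F_def by simp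
  finally have "f t - lim f = - (\<Sum>s. g (s + t))" .
  moreover have "\<bar>\<Sum>s. g (s + t)\<bar> \<le> (\<Sum>s. K * \<sigma> ^ t * \<sigma> ^ s)"
  proof -
    have tail: "summable (\<lambda>s. norm (g (s + t)))"
      using summable_ignore_initial_segment[OF g, of t] by simp
    have "\<bar>\<Sum>s. g (s + t)\<bar> \<le> (\<Sum>s. norm (g (s + t)))"
      using summable_norm[OF tail] by simp
    also have "\<dots> \<le> (\<Sum>s. K * \<sigma> ^ t * \<sigma> ^ s)"
    proof (rule suminf_le[OF _ tail])
      show "norm (g (s + t)) \<le> K * \<sigma> ^ t * \<sigma> ^ s" for s
        using step[of "s + t"] unfolding g_def power_add by (simp add: ac_simps)
      show "summable (\<lambda>s. K * \<sigma> ^ t * \<sigma> ^ s)"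
        using \<sigma> by (intro summable_mult summable_geometric) simp
    qed
    finally show ?thesis .
  qed
  moreover have "(\<Sum>s. K * \<sigma> ^ t * \<sigma> ^ s) = K / (1 - \<sigma>) * \<sigma> ^ t"
    using suminf_mult[OF summable_geometric[of \<sigma>], of "K * \<sigma> ^ t"] suminf_geometric[of \<sigma>] \<sigma>
    by simp
  ultimately show ?thesis by simp
qed

lemma geometric_decay:
  fixes f :: "nat \<Rightarrow> real"
  assumes "\<And>t. f (Suc t) \<le> \<rho> * f t" "0 \<le> \<rho>"
  shows "f t \<le> \<rho> ^ t * f 0"
proof (induction t)
  case (Suc t)
  have "f (Suc t) \<le> \<rho> * f t" by (rule assms(1))
  also have "\<dots> \<le> \<rho> * (\<rho> ^ t * f 0)" using Suc assms(2) by (rule mult_left_mono)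
  finally show ?case by (simp add: mult_ac)
qed simp

section \<open>Energy and disagreement on the cycle\<close>

lemma cyc_prev_in: "i \<in> {1..m} \<Longrightarrow> cyc_prev m i \<in> {1..m}"
  unfolding cyc_prev_def by auto

lemma bij_betw_cyc_prev: "bij_betw (cyc_prev m) {1..m} {1..m}"
  by (rule bij_betw_byWitness[where f' = "\<lambda>i. if i = m then 1 else Suc i"])
    (auto simp: cyc_prev_def)

lemma sum_cyc_prev: "(\<Sum>i\<in>{1..m}. f (cyc_prev m i)) = (\<Sum>i\<in>{1..m}. f i)"
  using sum.reindex_bij_betw[OF bij_betw_cyc_prev] .

lemma cyc_prev_invariant_imp_const:
  assumes invariant: "\<And>i. i \<in> {1..m} \<Longrightarrow> d i = d (cyc_prev m i)" and i: "i \<in> {1..m}"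
  shows "d i = d 1"
proof -
  have "1 \<le> i" "i \<le> m" using i by auto
  then show ?thesis
  proof (induction i rule: nat_induct_at_least)
    case (Suc i)
    then have "d (Suc i) = d i" using invariant[of "Suc i"] by (simp add: cyc_prev_def)
    then show ?case using Suc by simp
  qed simp
qed

definition energy :: "nat \<Rightarrow> (nat \<Rightarrow> real vec) \<Rightarrow> real" where
  "energy m d = (\<Sum>i\<in>{1..m}. d i \<bullet> d i)"

definition disagreement :: "nat \<Rightarrow> (nat \<Rightarrow> real vec) \<Rightarrow> real" where
  "disagreement m d = (\<Sum>i\<in>{1..m}. (d i - d (cyc_prev m i)) \<bullet> (d i - d (cyc_prev m i)))"

definition increment_space :: "nat \<Rightarrow> nat \<Rightarrow> (nat \<Rightarrow> real mat) \<Rightarrow> (nat \<Rightarrow> real vec) set" where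
  "increment_space n m P = {d. (\<forall>i\<in>{1..m}. d i \<in> carrier_vec n \<and> P i *\<^sub>v d i = d i) \<and>
     (\<forall>c\<in>carrier_vec n. (\<forall>i\<in>{1..m}. P i *\<^sub>v c = c) \<longrightarrow> (\<Sum>i\<in>{1..m}. d i \<bullet> c) = 0)}"

lemma energy_nonneg: "0 \<le> energy m d"
  unfolding energy_def by (intro sum_nonneg scalar_prod_self_nonneg)

lemma disagreement_nonneg: "0 \<le> disagreement m d"
  unfolding disagreement_def by (intro sum_nonneg scalar_prod_self_nonneg)

lemma index_sq_le_energy:
  assumes "i \<in> {1..m}" "d i \<in> carrier_vec n" "j < n"
  shows "(d i $ j)\<^sup>2 \<le> energy m d"
proof -
  have "(d i $ j)\<^sup>2 \<le> d i \<bullet> d i" using index_sq_le_scalar_prod_self assms(2,3) .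
  also have "\<dots> \<le> energy m d"
    unfolding energy_def using assms(1) by (intro member_le_sum scalar_prod_self_nonneg) auto
  finally show ?thesis .
qed

lemma energy_eq_0_if_disagreement_eq_0:
  assumes d: "d \<in> increment_space n m P" and no_disagreement: "disagreement m d = 0"
  shows "energy m d = 0"
proof (cases "m = 0")
  case False
  have carrier: "\<And>i. i \<in> {1..m} \<Longrightarrow> d i \<in> carrier_vec n"
    and fixed: "\<And>i. i \<in> {1..m} \<Longrightarrow> P i *\<^sub>v d i = d i"
    using d unfolding increment_space_def by auto
  have invariant: "d i = d (cyc_prev m i)" if i: "i \<in> {1..m}" for i
  proof -
    have "(d i - d (cyc_prev m i)) \<bullet> (d i - d (cyc_prev m i)) = 0"
      using no_disagreement i unfolding disagreement_def
      by (subst (asm) sum_nonneg_eq_0_iff) (auto intro: scalar_prod_self_nonneg)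
    then show ?thesis
      using scalar_prod_diff_self_eq_0_iff[OF carrier[OF i] carrier[OF cyc_prev_in[OF i]]] by blast
  qed
  have const: "d i = d 1" if "i \<in> {1..m}" for i
    using cyc_prev_invariant_imp_const[of m d, OF invariant that] .
  have one: "1 \<in> {1..m}" using False by simp
  have "P i *\<^sub>v d 1 = d 1" if "i \<in> {1..m}" for i
    using fixed[OF that] const[OF that] by simp
  then have "(\<Sum>i\<in>{1..m}. d i \<bullet> d 1) = 0"
    using d carrier[OF one] unfolding increment_space_def by blast
  moreover have "energy m d = (\<Sum>i\<in>{1..m}. d i \<bullet> d 1)"
    unfolding energy_def using const by (intro sum.cong refl) presburger
  ultimately show ?thesis by simp
qed (simp add: energy_def)

lemma smult_mem_increment_space:
  assumes P: "\<And>i. i \<in> {1..m} \<Longrightarrow> P i \<in> carrier_mat n n" and d: "d \<in> increment_space n m P"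
  shows "(\<lambda>i. s \<cdot>\<^sub>v d i) \<in> increment_space n m P"
proof -
  have "(\<Sum>i\<in>{1..m}. (s \<cdot>\<^sub>v d i) \<bullet> c) = s * (\<Sum>i\<in>{1..m}. d i \<bullet> c)" if "c \<in> carrier_vec n" for c
    using d that unfolding sum_distrib_left increment_space_def by (intro sum.cong) auto
  moreover have "P i *\<^sub>v (s \<cdot>\<^sub>v d i) = s \<cdot>\<^sub>v d i" if "i \<in> {1..m}" for i
    using d P[OF that] that unfolding increment_space_def by (auto simp: mult_mat_vec)
  ultimately show ?thesis
    using d unfolding increment_space_def by auto
qed

lemma energy_smult: "energy m (\<lambda>i. s \<cdot>\<^sub>v d i) = s\<^sup>2 * energy m d"
  unfolding energy_def sum_distrib_left by (simp add: scalar_prod_smult_self)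

lemma disagreement_smult:
  assumes "\<And>i. i \<in> {1..m} \<Longrightarrow> d i \<in> carrier_vec n"
  shows "disagreement m (\<lambda>i. s \<cdot>\<^sub>v d i) = s\<^sup>2 * disagreement m d"
proof -
  have "s \<cdot>\<^sub>v d i - s \<cdot>\<^sub>v d (cyc_prev m i) = s \<cdot>\<^sub>v (d i - d (cyc_prev m i))" if "i \<in> {1..m}" for i
    using assms[OF that] assms[OF cyc_prev_in[OF that]] by (intro eq_vecI) (auto simp: algebra_simps)
  then show ?thesis
    unfolding disagreement_def sum_distrib_left by (intro sum.cong) (auto simp: scalar_prod_smult_self)
qed

lemma tendsto_energy:
  assumes "\<And>i. i \<in> {1..m} \<Longrightarrow> vec_tendsto n (\<lambda>k. X k i) (Y i)"
    and "\<And>k i. i \<in> {1..m} \<Longrightarrow> X k i \<in> carrier_vec n" "\<And>i. i \<in> {1..m} \<Longrightarrow> Y i \<in> carrier_vec n"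
  shows "(\<lambda>k. energy m (X k)) \<longlonglongrightarrow> energy m Y"
  unfolding energy_def using assms by (intro tendsto_sum tendsto_scalar_prod) auto

lemma tendsto_disagreement:
  assumes "\<And>i. i \<in> {1..m} \<Longrightarrow> vec_tendsto n (\<lambda>k. X k i) (Y i)"
    and "\<And>k i. i \<in> {1..m} \<Longrightarrow> X k i \<in> carrier_vec n" "\<And>i. i \<in> {1..m} \<Longrightarrow> Y i \<in> carrier_vec n"
  shows "(\<lambda>k. disagreement m (X k)) \<longlonglongrightarrow> disagreement m Y"
proof -
  have "vec_tendsto n (\<lambda>k. X k i - X k (cyc_prev m i)) (Y i - Y (cyc_prev m i))" if "i \<in> {1..m}" for i
    using assms cyc_prev_in[OF that] that by (intro vec_tendsto_minus) auto
  then show ?thesis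
    unfolding disagreement_def using assms cyc_prev_in by (intro tendsto_sum tendsto_scalar_prod) auto
qed

lemma increment_space_closed:
  assumes P: "\<And>i. i \<in> {1..m} \<Longrightarrow> P i \<in> carrier_mat n n"
    and X: "\<And>k. X k \<in> increment_space n m P"
    and lim: "\<And>i. i \<in> {1..m} \<Longrightarrow> vec_tendsto n (\<lambda>k. X k i) (Y i)"
    and Y: "\<And>i. i \<in> {1..m} \<Longrightarrow> Y i \<in> carrier_vec n"
  shows "Y \<in> increment_space n m P"
proof -
  have X_carrier: "\<And>k i. i \<in> {1..m} \<Longrightarrow> X k i \<in> carrier_vec n"
    and X_fixed: "\<And>k i. i \<in> {1..m} \<Longrightarrow> P i *\<^sub>v X k i = X k i"
    using X unfolding increment_space_def by auto
  have "P i *\<^sub>v Y i = Y i" if i: "i \<in> {1..m}" for i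
  proof -
    have "vec_tendsto n (\<lambda>k. P i *\<^sub>v X k i) (P i *\<^sub>v Y i)"
      using lim P X_carrier Y i by (intro vec_tendsto_mult_mat_vec) auto
    then show ?thesis
      using vec_tendsto_unique lim[OF i] X_fixed[OF i] P[OF i] Y[OF i] by fastforce
  qed
  moreover have "(\<Sum>i\<in>{1..m}. Y i \<bullet> c) = 0"
    if c: "c \<in> carrier_vec n" and fixed: "\<forall>i\<in>{1..m}. P i *\<^sub>v c = c" for c
  proof -
    have "(\<lambda>k. \<Sum>i\<in>{1..m}. X k i \<bullet> c) \<longlonglongrightarrow> (\<Sum>i\<in>{1..m}. Y i \<bullet> c)"
      using lim c by (intro tendsto_sum tendsto_scalar_prod vec_tendsto_const) auto
    moreover have "(\<Sum>i\<in>{1..m}. X k i \<bullet> c) = 0" for k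
      using X[of k] c fixed unfolding increment_space_def by blast
    ultimately show ?thesis by (simp add: LIMSEQ_const_iff)
  qed
  ultimately show ?thesis using Y unfolding increment_space_def by auto
qed

lemma unit_energy_convergent_subseq:
  fixes dd :: "nat \<Rightarrow> nat \<Rightarrow> real vec"
  assumes P: "\<And>i. i \<in> {1..m} \<Longrightarrow> P i \<in> carrier_mat n n"
    and dd: "\<And>k. dd k \<in> increment_space n m P" "\<And>k. energy m (dd k) = 1"
  obtains r Y where "strict_mono r" "Y \<in> increment_space n m P" "energy m Y = 1"
    "(\<lambda>k. disagreement m (dd (r k))) \<longlonglongrightarrow> disagreement m Y"
proof -
  have dd_carrier: "\<And>k i. i \<in> {1..m} \<Longrightarrow> dd k i \<in> carrier_vec n"
    using dd(1) unfolding increment_space_def by blast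
  have "\<bar>dd k i $ j\<bar> \<le> 1" if "i \<in> {1..m}" "j < n" for k i j
    using index_sq_le_energy[where d = "dd k", OF that(1) dd_carrier[OF that(1)] that(2)] dd(2)[of k]
    by (simp add: abs_square_le_1)
  then obtain r Y where r: "strict_mono r" and Y: "\<And>i. Y i \<in> carrier_vec n"
    and lim: "\<And>i. i \<in> {1..m} \<Longrightarrow> vec_tendsto n (\<lambda>k. dd (r k) i) (Y i)"
    using bounded_vec_families_convergent_subseq[of "{1..m}" n dd 1] by blast
  have "(\<lambda>k. energy m (dd (r k))) \<longlonglongrightarrow> energy m Y"
    using tendsto_energy[of m n "\<lambda>k. dd (r k)" Y] lim dd_carrier Y by blast
  then have "energy m Y = 1" using dd(2) by (simp add: LIMSEQ_const_iff)
  moreover have "(\<lambda>k. disagreement m (dd (r k))) \<longlonglongrightarrow> disagreement m Y"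
    using tendsto_disagreement[of m n "\<lambda>k. dd (r k)" Y] lim dd_carrier Y by blast
  moreover have "Y \<in> increment_space n m P"
    using increment_space_closed[of m P n "\<lambda>k. dd (r k)" Y] P dd(1) lim Y by blast
  ultimately show ?thesis using that r by blast
qed

lemma disagreement_lower_bound_on_unit_energy:
  assumes P: "\<And>i. i \<in> {1..m} \<Longrightarrow> P i \<in> carrier_mat n n"
  shows "\<exists>\<kappa>>0. \<forall>d\<in>increment_space n m P. energy m d = 1 \<longrightarrow> \<kappa> \<le> disagreement m d"
proof (rule ccontr)
  assume "\<not> ?thesis"
  then have "\<forall>\<kappa>>0. \<exists>d\<in>increment_space n m P. energy m d = 1 \<and> disagreement m d < \<kappa>"
    by (auto simp: not_le)
  then have "\<exists>d\<in>increment_space n m P. energy m d = 1 \<and> disagreement m d < inverse (Suc k)" for k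
    by simp
  then obtain dd where dd: "\<And>k. dd k \<in> increment_space n m P" "\<And>k. energy m (dd k) = 1"
    and small: "\<And>k. disagreement m (dd k) < inverse (Suc k)"
    by metis
  obtain r Y where r: "strict_mono r" and Y: "Y \<in> increment_space n m P" "energy m Y = 1"
    and lim: "(\<lambda>k. disagreement m (dd (r k))) \<longlonglongrightarrow> disagreement m Y"
    using unit_energy_convergent_subseq[of m P n dd, OF P dd] by blast
  have "(\<lambda>k. disagreement m (dd k)) \<longlonglongrightarrow> 0"
  proof (rule real_tendsto_sandwich[OF _ _ tendsto_const LIMSEQ_inverse_real_of_nat])
    show "\<forall>\<^sub>F k in sequentially. 0 \<le> disagreement m (dd k)"
      by (intro always_eventually allI disagreement_nonneg)
    show "\<forall>\<^sub>F k in sequentially. disagreement m (dd k) \<le> inverse (real (Suc k))"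
      by (intro always_eventually allI less_imp_le small)
  qed
  then have "(\<lambda>k. disagreement m (dd (r k))) \<longlonglongrightarrow> 0"
    using LIMSEQ_subseq_LIMSEQ[OF _ r] by (simp add: comp_def)
  then have "disagreement m Y = 0" using lim LIMSEQ_unique by metis
  then have "energy m Y = 0" using energy_eq_0_if_disagreement_eq_0 Y(1) by blast
  then show False using Y(2) by simp
qed

lemma energy_le_disagreement:
  assumes P: "\<And>i. i \<in> {1..m} \<Longrightarrow> P i \<in> carrier_mat n n"
  obtains \<kappa> where "0 < \<kappa>" "\<And>d. d \<in> increment_space n m P \<Longrightarrow> \<kappa> * energy m d \<le> disagreement m d"
proof -
  obtain \<kappa> where \<kappa>: "0 < \<kappa>"
    and unit: "\<And>d. d \<in> increment_space n m P \<Longrightarrow> energy m d = 1 \<Longrightarrow> \<kappa> \<le> disagreement m d"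
    using disagreement_lower_bound_on_unit_energy[of m P n] P by blast
  have "\<kappa> * energy m d \<le> disagreement m d" if d: "d \<in> increment_space n m P" for d
  proof (cases "energy m d = 0")
    case False
    define s where "s = inverse (sqrt (energy m d))"
    have s2: "s\<^sup>2 * energy m d = 1"
      using False energy_nonneg[of m d] unfolding s_def by (simp add: power_inverse)
    have "disagreement m (\<lambda>i. s \<cdot>\<^sub>v d i) = s\<^sup>2 * disagreement m d"
      using d by (intro disagreement_smult) (auto simp: increment_space_def)
    then have "\<kappa> \<le> s\<^sup>2 * disagreement m d"
      using unit[OF smult_mem_increment_space[of m P n d s, OF P d]] s2 by (simp add: energy_smult)
    then have "\<kappa> * energy m d \<le> s\<^sup>2 * disagreement m d * energy m d"
      using energy_nonneg[of m d] by (rule mult_right_mono)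
    also have "\<dots> = disagreement m d * (s\<^sup>2 * energy m d)" by (simp add: mult_ac)
    finally show ?thesis using s2 by simp
  qed (simp add: disagreement_nonneg)
  then show ?thesis using that \<kappa> by blast
qed

section \<open>The iteration\<close>

locale cyclic_projection_iteration =
  fixes n m :: nat and P :: "nat \<Rightarrow> real mat" and x :: "nat \<Rightarrow> nat \<Rightarrow> real vec"
  assumes projection: "\<And>i. i \<in> {1..m} \<Longrightarrow> orthogonal_projection n (P i)"
    and initial: "\<And>i. i \<in> {1..m} \<Longrightarrow> x i 0 \<in> carrier_vec n"
    and step: "\<And>i t. i \<in> {1..m} \<Longrightarrow>
      x i (Suc t) = x i t - (1/2) \<cdot>\<^sub>v (P i *\<^sub>v (x i t - x (cyc_prev m i) t))"
begin

lemma P_carrier: "i \<in> {1..m} \<Longrightarrow> P i \<in> carrier_mat n n"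
  using projection unfolding orthogonal_projection_def by blast

lemma x_carrier:
  assumes i: "i \<in> {1..m}"
  shows "x i t \<in> carrier_vec n"
proof (induction t)
  case (Suc t)
  show ?case using step[OF i, of t] P_carrier[OF i] by (simp add: carrier_vecI)
qed (rule initial[OF i])

definition increment :: "nat \<Rightarrow> nat \<Rightarrow> real vec" where
  "increment t i = (1/2) \<cdot>\<^sub>v (P i *\<^sub>v (x i t - x (cyc_prev m i) t))"

lemma increment_carrier: "i \<in> {1..m} \<Longrightarrow> increment t i \<in> carrier_vec n"
  unfolding increment_def using P_carrier[of i] by (auto intro!: carrier_vecI)

lemma x_Suc: "i \<in> {1..m} \<Longrightarrow> x i (Suc t) = x i t - increment t i"
  unfolding increment_def by (rule step)

lemma P_increment:
  assumes i: "i \<in> {1..m}"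
  shows "P i *\<^sub>v increment t i = increment t i"
proof -
  have "x i t - x (cyc_prev m i) t \<in> carrier_vec n"
    using x_carrier[OF i] x_carrier[OF cyc_prev_in[OF i]] by simp
  then show ?thesis
    unfolding increment_def
    using projection[OF i] P_carrier[OF i] orthogonal_projection_idem_vec
    by (simp add: mult_mat_vec)
qed

lemma increment_Suc:
  assumes i: "i \<in> {1..m}"
  shows "increment (Suc t) i = (1/2) \<cdot>\<^sub>v (increment t i + P i *\<^sub>v increment t (cyc_prev m i))"
proof -
  let ?p = "cyc_prev m i"
  have p: "?p \<in> {1..m}" using cyc_prev_in[OF i] .
  have carrier: "x i t \<in> carrier_vec n" "x ?p t \<in> carrier_vec n"
    "increment t i \<in> carrier_vec n" "increment t ?p \<in> carrier_vec n"
    using x_carrier increment_carrier i p by auto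
  have "x i (Suc t) - x ?p (Suc t) = (x i t - x ?p t) - (increment t i - increment t ?p)"
    unfolding x_Suc[OF i] x_Suc[OF p] using carrier by (intro eq_vecI) auto
  then have "P i *\<^sub>v (x i (Suc t) - x ?p (Suc t))
      = P i *\<^sub>v (x i t - x ?p t) - (P i *\<^sub>v increment t i - P i *\<^sub>v increment t ?p)"
    using P_carrier[OF i] carrier by (simp add: mult_minus_distrib_mat_vec)
  also have "P i *\<^sub>v (x i t - x ?p t) = 2 \<cdot>\<^sub>v increment t i"
    unfolding increment_def using P_carrier[OF i] carrier by (intro eq_vecI) auto
  finally show ?thesis
    unfolding increment_def[of "Suc t"] P_increment[OF i]
    using carrier P_carrier[OF i] by (intro eq_vecI) auto
qed

lemma increment_mem_increment_space: "increment t \<in> increment_space n m P"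
proof -
  have "(\<Sum>i\<in>{1..m}. increment t i \<bullet> c) = 0"
    if c: "c \<in> carrier_vec n" and fixed: "\<forall>i\<in>{1..m}. P i *\<^sub>v c = c" for c
  proof -
    have "increment t i \<bullet> c = (1/2) * (x i t \<bullet> c - x (cyc_prev m i) t \<bullet> c)" if i: "i \<in> {1..m}" for i
    proof -
      have diff: "x i t - x (cyc_prev m i) t \<in> carrier_vec n"
        using x_carrier[OF i] x_carrier[OF cyc_prev_in[OF i]] by simp
      have "increment t i \<bullet> c = (1/2) * ((P i *\<^sub>v (x i t - x (cyc_prev m i) t)) \<bullet> c)"
        unfolding increment_def using P_carrier[OF i] diff c by simp
      also have "(P i *\<^sub>v (x i t - x (cyc_prev m i) t)) \<bullet> c = (x i t - x (cyc_prev m i) t) \<bullet> c"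
        using scalar_prod_symmetric_mult_mat_vec[OF P_carrier[OF i] _ diff c] projection[OF i] fixed i
        unfolding orthogonal_projection_def by simp
      finally show ?thesis
        using minus_scalar_prod_distrib[OF x_carrier[OF i] x_carrier[OF cyc_prev_in[OF i]] c] by simp
    qed
    then have "(\<Sum>i\<in>{1..m}. increment t i \<bullet> c)
        = (\<Sum>i\<in>{1..m}. (1/2) * (x i t \<bullet> c - x (cyc_prev m i) t \<bullet> c))"
      by (intro sum.cong) auto
    also have "\<dots> = (1/2) * ((\<Sum>i\<in>{1..m}. x i t \<bullet> c) - (\<Sum>i\<in>{1..m}. x (cyc_prev m i) t \<bullet> c))"
      by (simp only: sum_distrib_left[symmetric] sum_subtractf)
    also have "(\<Sum>i\<in>{1..m}. x (cyc_prev m i) t \<bullet> c) = (\<Sum>i\<in>{1..m}. x i t \<bullet> c)"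
      by (rule sum_cyc_prev)
    finally show ?thesis by simp
  qed
  then show ?thesis
    unfolding increment_space_def using increment_carrier P_increment by blast
qed

lemma energy_increment_Suc:
  "energy m (increment (Suc t)) + (1/4) * disagreement m (increment t) \<le> energy m (increment t)"
proof -
  let ?D = "increment t" and ?p = "cyc_prev m"
  have "energy m (increment (Suc t)) + (1/4) * disagreement m ?D
      = (\<Sum>i\<in>{1..m}. ((1/2) \<cdot>\<^sub>v (?D i + P i *\<^sub>v ?D (?p i))) \<bullet> ((1/2) \<cdot>\<^sub>v (?D i + P i *\<^sub>v ?D (?p i)))
          + (1/4) * ((?D i - ?D (?p i)) \<bullet> (?D i - ?D (?p i))))"
    unfolding energy_def disagreement_def sum_distrib_left sum.distrib[symmetric]
    by (intro sum.cong) (auto simp: increment_Suc)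
  also have "\<dots> \<le> (\<Sum>i\<in>{1..m}. (1/2) * (?D i \<bullet> ?D i) + (1/2) * (?D (?p i) \<bullet> ?D (?p i)))"
    using projection increment_carrier cyc_prev_in P_increment
    by (intro sum_mono orthogonal_projection_average_le) auto
  also have "\<dots> = (1/2) * energy m ?D + (1/2) * (\<Sum>i\<in>{1..m}. ?D (?p i) \<bullet> ?D (?p i))"
    unfolding energy_def by (simp add: sum.distrib sum_distrib_left)
  also have "(\<Sum>i\<in>{1..m}. ?D (?p i) \<bullet> ?D (?p i)) = energy m ?D"
    unfolding energy_def by (rule sum_cyc_prev)
  finally show ?thesis by simp
qed

lemma energy_increment_geometric:
  obtains \<rho> where "0 \<le> \<rho>" "\<rho> < 1" "\<And>t. energy m (increment t) \<le> \<rho> ^ t * energy m (increment 0)"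
proof -
  obtain \<kappa> where \<kappa>: "0 < \<kappa>"
    and bound: "\<And>d. d \<in> increment_space n m P \<Longrightarrow> \<kappa> * energy m d \<le> disagreement m d"
    using energy_le_disagreement[of m P n] P_carrier by blast
  define \<rho> where "\<rho> = 1 - min \<kappa> 1 / 4"
  have "energy m (increment (Suc t)) \<le> \<rho> * energy m (increment t)" for t
  proof -
    have "min \<kappa> 1 * energy m (increment t) \<le> disagreement m (increment t)"
      using bound[OF increment_mem_increment_space] energy_nonneg[of m "increment t"]
      by (meson min.cobounded1 mult_right_mono order_trans)
    then show ?thesis using energy_increment_Suc[of t] unfolding \<rho>_def by (simp add: algebra_simps)
  qed
  then have "energy m (increment t) \<le> \<rho> ^ t * energy m (increment 0)" for t
    using \<kappa> unfolding \<rho>_def by (intro geometric_decay) auto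
  moreover have "0 \<le> \<rho>" "\<rho> < 1" unfolding \<rho>_def using \<kappa> by auto
  ultimately show ?thesis using that by blast
qed

lemma increment_index_bound:
  obtains K \<sigma> where "0 \<le> K" "0 \<le> \<sigma>" "\<sigma> < 1"
    "\<And>t i j. i \<in> {1..m} \<Longrightarrow> j < n \<Longrightarrow> \<bar>increment t i $ j\<bar> \<le> K * \<sigma> ^ t"
proof -
  obtain \<rho> where \<rho>: "0 \<le> \<rho>" "\<rho> < 1"
    and decay: "\<And>t. energy m (increment t) \<le> \<rho> ^ t * energy m (increment 0)"
    using energy_increment_geometric by blast
  define K where "K = sqrt (energy m (increment 0))"
  have "\<bar>increment t i $ j\<bar> \<le> K * sqrt \<rho> ^ t" if "i \<in> {1..m}" "j < n" for t i j
  proof -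
    have "(increment t i $ j)\<^sup>2 \<le> \<rho> ^ t * energy m (increment 0)"
      using index_sq_le_energy[where d = "increment t", OF that(1) increment_carrier[OF that(1)] that(2)]
        decay[of t]
      by linarith
    then have "\<bar>increment t i $ j\<bar> \<le> sqrt (\<rho> ^ t * energy m (increment 0))"
      using real_sqrt_le_mono real_sqrt_abs by metis
    then show ?thesis unfolding K_def real_sqrt_mult real_sqrt_power by (simp add: mult.commute)
  qed
  moreover have "0 \<le> K" unfolding K_def using energy_nonneg by simp
  ultimately show ?thesis using that \<rho> by (meson real_sqrt_ge_zero real_sqrt_lt_1_iff)
qed

definition limit :: "nat \<Rightarrow> real vec" where
  "limit i = vec n (\<lambda>j. lim (\<lambda>t. x i t $ j))"

lemma limit_carrier: "limit i \<in> carrier_vec n"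
  unfolding limit_def by simp

lemma x_limit_index_bound:
  obtains B \<sigma> where "0 \<le> B" "0 \<le> \<sigma>" "\<sigma> < 1"
    "\<And>t i j. i \<in> {1..m} \<Longrightarrow> j < n \<Longrightarrow> \<bar>x i t $ j - limit i $ j\<bar> \<le> B * \<sigma> ^ t"
proof -
  obtain K \<sigma> where K: "0 \<le> K" and \<sigma>: "0 \<le> \<sigma>" "\<sigma> < 1"
    and bound: "\<And>t i j. i \<in> {1..m} \<Longrightarrow> j < n \<Longrightarrow> \<bar>increment t i $ j\<bar> \<le> K * \<sigma> ^ t"
    using increment_index_bound by blast
  have "\<bar>x i t $ j - limit i $ j\<bar> \<le> K / (1 - \<sigma>) * \<sigma> ^ t" if i: "i \<in> {1..m}" and j: "j < n" for t i j
  proof -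
    have "\<bar>x i (Suc t) $ j - x i t $ j\<bar> \<le> K * \<sigma> ^ t" for t
      using bound[OF i j, of t] x_Suc[OF i, of t] increment_carrier[OF i, of t] j by simp
    then show ?thesis
      using geometric_increments_lim_bound[of "\<lambda>t. x i t $ j", OF _ \<sigma>] j unfolding limit_def by simp
  qed
  moreover have "0 \<le> K / (1 - \<sigma>)" using K \<sigma> by simp
  ultimately show ?thesis using that \<sigma> by blast
qed

lemma x_converges_exponentially:
  "\<exists>c>0. \<exists>\<rho>. 0 \<le> \<rho> \<and> \<rho> < 1 \<and> (\<forall>i\<in>{1..m}. \<forall>t. vnorm (x i t - limit i) \<le> c * \<rho> ^ t)"
proof -
  obtain B \<sigma> where B: "0 \<le> B" and \<sigma>: "0 \<le> \<sigma>" "\<sigma> < 1"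
    and bound: "\<And>t i j. i \<in> {1..m} \<Longrightarrow> j < n \<Longrightarrow> \<bar>x i t $ j - limit i $ j\<bar> \<le> B * \<sigma> ^ t"
    using x_limit_index_bound by blast
  have "vnorm (x i t - limit i) \<le> (sqrt (real n) * B + 1) * \<sigma> ^ t" if i: "i \<in> {1..m}" for i t
  proof -
    have "vnorm (x i t - limit i) \<le> sqrt (real n) * (B * \<sigma> ^ t)"
      using x_carrier[OF i, of t] limit_carrier[of i] bound[OF i]
      by (intro vnorm_le_sqrt_dim) auto
    also have "\<dots> \<le> (sqrt (real n) * B + 1) * \<sigma> ^ t" using \<sigma> by (simp add: algebra_simps)
    finally show ?thesis .
  qed
  moreover have "0 < sqrt (real n) * B + 1" using B by (simp add: add_nonneg_pos)
  ultimately show ?thesis using \<sigma> by blast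
qed

lemma P_limit_diff_eq_0:
  assumes i: "i \<in> {1..m}"
  shows "P i *\<^sub>v (limit i - limit (cyc_prev m i)) = 0\<^sub>v n"
proof -
  let ?p = "cyc_prev m i"
  have p: "?p \<in> {1..m}" using cyc_prev_in[OF i] .
  obtain B \<sigma> where "0 \<le> B" and \<sigma>: "0 \<le> \<sigma>" "\<sigma> < 1"
    and bound: "\<And>t i j. i \<in> {1..m} \<Longrightarrow> j < n \<Longrightarrow> \<bar>x i t $ j - limit i $ j\<bar> \<le> B * \<sigma> ^ t"
    by (rule x_limit_index_bound) (rule that)
  obtain K \<tau> where "0 \<le> K" and \<tau>: "0 \<le> \<tau>" "\<tau> < 1"
    and inc_bound: "\<And>t i j. i \<in> {1..m} \<Longrightarrow> j < n \<Longrightarrow> \<bar>increment t i $ j\<bar> \<le> K * \<tau> ^ t"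
    by (rule increment_index_bound) (rule that)
  have x_limit: "vec_tendsto n (\<lambda>t. x k t) (limit k)" if "k \<in> {1..m}" for k
    using bound[OF that] \<sigma> by (rule vec_tendsto_geometricI)
  have "vec_tendsto n (\<lambda>t. x i t - x ?p t) (limit i - limit ?p)"
    using x_limit[OF i] x_limit[OF p] x_carrier[OF p] limit_carrier by (rule vec_tendsto_minus)
  then have "vec_tendsto n (\<lambda>t. P i *\<^sub>v (x i t - x ?p t)) (P i *\<^sub>v (limit i - limit ?p))"
    using P_carrier[OF i] x_carrier[OF i] x_carrier[OF p] limit_carrier
    by (intro vec_tendsto_mult_mat_vec) auto
  moreover have "vec_tendsto n (\<lambda>t. P i *\<^sub>v (x i t - x ?p t)) (0\<^sub>v n)"
  proof (rule vec_tendsto_geometricI[OF _ \<tau>])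
    fix t j assume j: "j < n"
    have "P i *\<^sub>v (x i t - x ?p t) = 2 \<cdot>\<^sub>v increment t i"
      unfolding increment_def using P_carrier[OF i] by (intro eq_vecI) auto
    then show "\<bar>(P i *\<^sub>v (x i t - x ?p t)) $ j - 0\<^sub>v n $ j\<bar> \<le> 2 * K * \<tau> ^ t"
      using inc_bound[OF i j, of t] increment_carrier[OF i, of t] j by simp
  qed
  ultimately show ?thesis
    by (rule vec_tendsto_unique) (use P_carrier[OF i] limit_carrier in auto)
qed

end

theorem theorem7:
  fixes n m :: nat and k :: "nat \<Rightarrow> nat"
    and C :: "nat \<Rightarrow> real mat" and x :: "nat \<Rightarrow> nat \<Rightarrow> real vec"
  assumes "m \<ge> 2"
    and "\<And>i. i \<in> {1..m} \<Longrightarrow> C i \<in> carrier_mat (k i) n"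
    and "\<And>i. i \<in> {1..m} \<Longrightarrow> full_row_rank (C i)"
    and "well_configured n m C"
    and "\<And>i. i \<in> {1..m} \<Longrightarrow> x i 0 \<in> carrier_vec n"
    and "\<And>i t. i \<in> {1..m} \<Longrightarrow>
           x i (Suc t) = x i t - (1/2) \<cdot>\<^sub>v (proj_mat (C i) *\<^sub>v (x i t - x (cyc_prev m i) t))"
  shows "\<exists>xstar \<in> carrier_vec n. \<exists>c > 0. \<exists>\<rho>. 0 \<le> \<rho> \<and> \<rho> < 1 \<and>
           (\<forall>i\<in>{1..m}. \<forall>t. vnorm (x i t - xstar) \<le> c * \<rho> ^ t)"
proof -
  have "orthogonal_projection n (proj_mat (C i))" if "i \<in> {1..m}" for i
    using proj_mat_orthogonal_projection assms(2,3) that by blast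
  then interpret cyclic_projection_iteration n m "\<lambda>i. proj_mat (C i)" x
    using assms(5,6) by unfold_locales blast+
  have "\<forall>i\<in>{1..m}. C i *\<^sub>v limit i = C i *\<^sub>v limit (cyc_prev m i)"
    using proj_mat_mult_vec_diff_eq_0[OF assms(2) assms(3) limit_carrier limit_carrier P_limit_diff_eq_0]
    by blast
  moreover have "\<forall>i\<in>{1..m}. limit i \<in> carrier_vec n" using limit_carrier by blast
  moreover have "1 \<in> {1..m}" using assms(1) by simp
  ultimately have consensus: "limit i = limit 1" if "i \<in> {1..m}" for i
    using assms(4) that unfolding well_configured_def by blast
  obtain c \<rho> where "c > 0" "0 \<le> \<rho>" "\<rho> < 1"
    and rate: "\<And>i t. i \<in> {1..m} \<Longrightarrow> vnorm (x i t - limit i) \<le> c * \<rho> ^ t"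
    using x_converges_exponentially by blast
  moreover have "vnorm (x i t - limit 1) \<le> c * \<rho> ^ t" if "i \<in> {1..m}" for i t
    using rate[OF that] unfolding consensus[OF that] .
  ultimately show ?thesis using limit_carrier by blast
qed

end
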